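(* Let $k\in\mathbb N$, $\xi'=(\xi_1,\dots,\xi_{k+1})\in\mathcal P_0^{k+1}$ with $\xi_1=z$, and $\xi=(\xi_1,\dots,\xi_k)$. Then $\pi_{\xi'}(p)\le\pi_\xi(p)$ for all $p\in\mathbb C[z]$. Moreover, if $U$ is a connected open subset of $\gamma(\xi)\mathbb D$ with $0\in U$ and $\xi_{k+1}(U)\subseteq\mathbb D$, and $q\in\mathbb C[z]\setminus\{0\}$ is a divisor of $\xi_{k+1}$ (in $\mathbb C[z]$) with all its zeros in $U$, then $\pi_{\xi,q}(p)\le\pi_{\xi'}(p)$ for every $p\in\mathbb C[z]$.
   Context: $\mathbb D$ is the open unit disk, $\mathcal P_0=\{p\in\mathbb C[z]:p(0)=0\}$. For $k\in\mathbb N$, $\mathcal A^{[k]}$ is the Banach algebra of power series $a=\sum_{n\in\mathbb Z_+^k}a_nu_1^{n_1}\cdots u_k^{n_k}$ with $\|a\|_{[k]}=\sum|a_n|<\infty$ (functions continuous on the closed polydisk, holomorphic on $\mathbb D^k$). For $\xi\in\mathcal P_0^k$, $\gamma(\xi)=\sup\{c>0:\xi_j(c\mathbb D)\subseteq\mathbb D,\ 1\le j\le k\}$ and $\Phi_\xi(a)(z)=a(\xi_1(z),\dots,\xi_k(z))$, a holomorphic function on $\gamma(\xi)\mathbb D$. When $\xi_1=z$, every polynomial lies in $\Phi_\xi(\mathcal A^{[k]})$, and one defines $\pi_\xi(p)=\inf\{\|a\|_{[k]}:a\in\mathcal A^{[k]},\ \Phi_\xi(a)=p\}$. For a nonzero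 polynomial $q$ with all zeros in $\gamma(\xi)\mathbb D$ and $f$ holomorphic on $\gamma(\xi)\mathbb D$, $q\mid f$ means every zero of $q$ of order $j$ is a zero of $f$ of order $\ge j$; then $\pi_{\xi,q}(p)=\inf\{\|a\|_{[k]}:a\in\mathcal A^{[k]},\ q\mid(p-\Phi_\xi(a))\}$. *)

theory Defs
  imports "HOL-Analysis.Analysis" "HOL-Computational_Algebra.Polynomial"
begin

text \<open>Multi-indices in Z_+^k are represented as functions nat => nat vanishing
  from index k on; coordinate u_(i+1) of the paper corresponds to index i.\<close>
definition multi_idx :: "nat \<Rightarrow> (nat \<Rightarrow> nat) set" where
  "multi_idx k = {n. \<forall>i. k \<le> i \<longrightarrow> n i = 0}"

definition Aalg :: "nat \<Rightarrow> ((nat \<Rightarrow> nat) \<Rightarrow> complex) set" where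
  "Aalg k = {a. (\<forall>n. n \<notin> multi_idx k \<longrightarrow> a n = 0) \<and> (\<lambda>n. norm (a n)) summable_on multi_idx k}"

definition normA :: "nat \<Rightarrow> ((nat \<Rightarrow> nat) \<Rightarrow> complex) \<Rightarrow> real" where
  "normA k a = (\<Sum>\<^sub>\<infinity>n\<in>multi_idx k. norm (a n))"

text \<open>gamma(xi) for xi = (xi 0, ..., xi (k-1)).\<close>
definition gammaP :: "nat \<Rightarrow> (nat \<Rightarrow> complex poly) \<Rightarrow> real" where
  "gammaP k \<xi> = Sup {c. c > 0 \<and> (\<forall>j<k. poly (\<xi> j) ` ball 0 c \<subseteq> ball 0 1)}"

definition Phi :: "nat \<Rightarrow> (nat \<Rightarrow> complex poly) \<Rightarrow> ((nat \<Rightarrow> nat) \<Rightarrow> complex) \<Rightarrow> complex \<Rightarrow> complex" where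
  "Phi k \<xi> a z = (\<Sum>\<^sub>\<infinity>n\<in>multi_idx k. a n * (\<Prod>i<k. poly (\<xi> i) z ^ n i))"

text \<open>q | f: every zero w of q of order j is a zero of f of order at least j,
  i.e. the derivatives of f of order < j vanish at w.\<close>
definition pdivides :: "complex poly \<Rightarrow> (complex \<Rightarrow> complex) \<Rightarrow> bool" where
  "pdivides q f = (\<forall>w. poly q w = 0 \<longrightarrow> (\<forall>i < order w q. (deriv ^^ i) f w = 0))"

definition piX :: "nat \<Rightarrow> (nat \<Rightarrow> complex poly) \<Rightarrow> complex poly \<Rightarrow> real" where
  "piX k \<xi> p = Inf {normA k a | a. a \<in> Aalg k \<and>
      (\<forall>z\<in>ball 0 (gammaP k \<xi>). Phi k \<xi> a z = poly p z)}"

definition piXq :: "nat \<Rightarrow> (nat \<Rightarrow> complex poly) \<Rightarrow> complex poly \<Rightarrow> complex poly \<Rightarrow> real" where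
  "piXq k \<xi> q p = Inf {normA k a | a. a \<in> Aalg k \<and>
      pdivides q (\<lambda>z. poly p z - Phi k \<xi> a z)}"

end

theory Submission
  imports Defs "HOL-Complex_Analysis.Complex_Analysis"
begin

text \<open>
  An element of \<open>A^[k]\<close> is an element of \<open>A^[k+1]\<close> not involving \<open>u_{k+1}\<close>, with the same norm
  and the same image under \<open>\<Phi>\<close>; this gives \<open>\<pi>_\<xi>' \<le> \<pi>_\<xi>\<close>. Conversely, split \<open>b \<in> A^[k+1]\<close> as
  \<open>b = b_0 + u_{k+1} c\<close>, where \<open>b_0\<close> collects the monomials free of \<open>u_{k+1}\<close>. Then
  \<open>\<parallel>b_0\<parallel> \<le> \<parallel>b\<parallel>\<close>, and \<open>\<Phi>_\<xi>'(b) = \<Phi>_\<xi>(b_0) + \<xi>_{k+1} \<Phi>_\<xi>'(c)\<close> wherever all \<open>\<xi>_j\<close> lie in the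
  unit disk, in particular on \<open>U\<close>. If \<open>\<Phi>_\<xi>'(b) = p\<close> near 0, analytic continuation gives it on
  the connected set \<open>U\<close>, so \<open>p - \<Phi>_\<xi>(b_0) = \<xi>_{k+1} \<Phi>_\<xi>'(c)\<close> is a holomorphic multiple of \<open>q\<close>
  on \<open>U\<close>; hence \<open>q\<close> divides it, and \<open>\<pi>_{\<xi>,q}(p) \<le> \<parallel>b_0\<parallel> \<le> \<parallel>b\<parallel>\<close>.
\<close>

subsection \<open>The radius \<open>\<gamma>(\<xi>)\<close> and the domain of \<open>\<Phi>\<^sub>\<xi>\<close>\<close>

definition admissible_radii :: "nat \<Rightarrow> (nat \<Rightarrow> complex poly) \<Rightarrow> real set" where
  "admissible_radii m \<xi> = {c. c > 0 \<and> (\<forall>j<m. poly (\<xi> j) ` ball 0 c \<subseteq> ball 0 1)}"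

lemma gammaP_eq_Sup_admissible_radii: "gammaP m \<xi> = Sup (admissible_radii m \<xi>)"
  by (simp add: gammaP_def admissible_radii_def)

lemma admissible_radii_nonempty:
  assumes "\<forall>j<m. poly (\<xi> j) 0 = 0"
  shows "admissible_radii m \<xi> \<noteq> {}"
  using assms
proof (induction m)
  case 0
  then show ?case by (auto simp: admissible_radii_def intro: exI[of _ 1])
next
  case (Suc m)
  then obtain c where c: "c \<in> admissible_radii m \<xi>" by auto
  have "isCont (poly (\<xi> m)) 0" by simp
  then obtain d where d: "d > 0" "\<And>y. dist y 0 < d \<Longrightarrow> dist (poly (\<xi> m) y) (poly (\<xi> m) 0) < 1"
    unfolding continuous_at_eps_delta by (meson zero_less_one)
  have "poly (\<xi> j) ` ball 0 (min c d) \<subseteq> ball 0 1" if "j < Suc m" for j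
  proof (cases "j = m")
    case True
    then show ?thesis using d Suc.prems by (auto simp: dist_norm)
  next
    case False
    then have "poly (\<xi> j) ` ball 0 c \<subseteq> ball 0 1"
      using c that by (simp add: admissible_radii_def)
    then show ?thesis by auto
  qed
  then have "min c d \<in> admissible_radii (Suc m) \<xi>"
    using c d(1) by (simp add: admissible_radii_def)
  then show ?case by blast
qed

lemma admissible_radius_le_1:
  assumes "m \<ge> 1" "\<xi> 0 = [:0, 1:]" "c \<in> admissible_radii m \<xi>"
  shows "c \<le> 1"
proof (rule ccontr)
  assume "\<not> c \<le> 1"
  then have "poly (\<xi> 0) 1 \<in> ball 0 1"
    using assms unfolding admissible_radii_def by fastforce
  then show False using assms by simp
qed

lemma bdd_above_admissible_radii:
  assumes "m \<ge> 1" "\<xi> 0 = [:0, 1:]"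
  shows "bdd_above (admissible_radii m \<xi>)"
  using admissible_radius_le_1[of m \<xi>, OF assms] by (auto simp: bdd_above_def)

lemma gammaP_pos:
  assumes "m \<ge> 1" "\<xi> 0 = [:0, 1:]" "\<forall>j<m. poly (\<xi> j) 0 = 0"
  shows "gammaP m \<xi> > 0"
proof -
  obtain c where c: "c \<in> admissible_radii m \<xi>"
    using admissible_radii_nonempty[OF assms(3)] by blast
  then have "c \<le> gammaP m \<xi>"
    unfolding gammaP_eq_Sup_admissible_radii
    using bdd_above_admissible_radii[of m \<xi>, OF assms(1,2)] by (intro cSup_upper)
  moreover have "c > 0" using c by (simp add: admissible_radii_def)
  ultimately show ?thesis by simp
qed

definition polydisc_preimage :: "nat \<Rightarrow> (nat \<Rightarrow> complex poly) \<Rightarrow> complex set" where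
  "polydisc_preimage m \<xi> = {z. \<forall>j<m. norm (poly (\<xi> j) z) < 1}"

lemma open_polydisc_preimage: "open (polydisc_preimage m \<xi>)"
proof -
  have "polydisc_preimage m \<xi> = (\<Inter>j<m. {z. norm (poly (\<xi> j) z) < 1})"
    by (auto simp: polydisc_preimage_def)
  moreover have "open {z. norm (poly (\<xi> j) z) < 1}" for j
    by (intro open_Collect_less continuous_intros)
  ultimately show ?thesis by auto
qed

lemma polydisc_preimage_Suc:
  "polydisc_preimage (Suc k) \<xi> = polydisc_preimage k \<xi> \<inter> {z. norm (poly (\<xi> k) z) < 1}"
  by (auto simp: polydisc_preimage_def less_Suc_eq)

lemma ball_gammaP_subset_polydisc_preimage:
  assumes "m \<ge> 1" "\<xi> 0 = [:0, 1:]" "\<forall>j<m. poly (\<xi> j) 0 = 0"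
  shows "ball 0 (gammaP m \<xi>) \<subseteq> polydisc_preimage m \<xi>"
proof
  fix z :: complex assume "z \<in> ball 0 (gammaP m \<xi>)"
  then have "norm z < Sup (admissible_radii m \<xi>)"
    by (simp add: gammaP_eq_Sup_admissible_radii)
  then obtain c where "c \<in> admissible_radii m \<xi>" "norm z < c"
    using admissible_radii_nonempty[OF assms(3)] bdd_above_admissible_radii[of m \<xi>, OF assms(1,2)]
    by (subst (asm) less_cSup_iff) auto
  then show "z \<in> polydisc_preimage m \<xi>"
    unfolding admissible_radii_def polydisc_preimage_def by force
qed

lemma gammaP_Suc_le:
  assumes "m \<ge> 1" "\<xi> 0 = [:0, 1:]" "\<forall>j<Suc m. poly (\<xi> j) 0 = 0"
  shows "gammaP (Suc m) \<xi> \<le> gammaP m \<xi>"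
  unfolding gammaP_eq_Sup_admissible_radii
proof (rule cSup_subset_mono)
  show "admissible_radii (Suc m) \<xi> \<noteq> {}" using admissible_radii_nonempty[OF assms(3)] .
  show "bdd_above (admissible_radii m \<xi>)" using bdd_above_admissible_radii[of m \<xi>, OF assms(1,2)] .
  show "admissible_radii (Suc m) \<xi> \<subseteq> admissible_radii m \<xi>"
    unfolding admissible_radii_def by (auto simp: subset_iff) (metis image_eqI less_SucI mem_ball_0)
qed

subsection \<open>Holomorphy of \<open>\<Phi>\<close>\<close>

definition Phi_term ::
    "nat \<Rightarrow> (nat \<Rightarrow> complex poly) \<Rightarrow> ((nat \<Rightarrow> nat) \<Rightarrow> complex) \<Rightarrow> (nat \<Rightarrow> nat) \<Rightarrow> complex \<Rightarrow> complex"
  where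
  "Phi_term m \<xi> a n z = a n * (\<Prod>i<m. poly (\<xi> i) z ^ n i)"

lemma Phi_eq_infsum_Phi_term: "Phi m \<xi> a z = (\<Sum>\<^sub>\<infinity>n\<in>multi_idx m. Phi_term m \<xi> a n z)"
  by (simp add: Phi_def Phi_term_def)

lemma norm_Phi_term_le:
  assumes "\<forall>j<m. norm (poly (\<xi> j) z) \<le> 1"
  shows "norm (Phi_term m \<xi> a n z) \<le> norm (a n)"
proof -
  have "norm (\<Prod>i<m. poly (\<xi> i) z ^ n i) = (\<Prod>i<m. norm (poly (\<xi> i) z) ^ n i)"
    by (simp add: prod_norm[symmetric] norm_power)
  also have "\<dots> \<le> 1"
    using assms by (intro prod_le_1) (auto intro: power_le_one)
  finally show ?thesis
    unfolding Phi_term_def norm_mult by (simp add: mult_left_le)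
qed

lemma summable_on_Phi_term:
  assumes "a \<in> Aalg m" "\<forall>j<m. norm (poly (\<xi> j) z) \<le> 1" "A \<subseteq> multi_idx m"
  shows "(\<lambda>n. Phi_term m \<xi> a n z) summable_on A"
proof -
  have "(\<lambda>n. norm (a n)) summable_on multi_idx m"
    using assms(1) by (simp add: Aalg_def)
  then have "(\<lambda>n. norm (Phi_term m \<xi> a n z)) summable_on multi_idx m"
    by (rule Infinite_Sum.abs_summable_on_comparison_test) (use norm_Phi_term_le[OF assms(2)] in auto)
  then have "(\<lambda>n. Phi_term m \<xi> a n z) summable_on multi_idx m"
    by (rule abs_summable_summable)
  then show ?thesis
    using assms(3) by (rule summable_on_subset_banach)
qed

lemma holomorphic_Phi:
  assumes "a \<in> Aalg m"
  shows "Phi m \<xi> a holomorphic_on polydisc_preimage m \<xi>"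
proof -
  have holo_ball: "Phi m \<xi> a holomorphic_on ball z r"
    if "cball z r \<subseteq> polydisc_preimage m \<xi>" for z r
  proof -
    have ul: "uniform_limit (cball z r) (\<lambda>X y. \<Sum>n\<in>X. Phi_term m \<xi> a n y)
       (\<lambda>y. \<Sum>\<^sub>\<infinity>n\<in>multi_idx m. Phi_term m \<xi> a n y) (finite_subsets_at_top (multi_idx m))"
    proof (rule Weierstrass_m_test_general)
      show "norm (Phi_term m \<xi> a n y) \<le> norm (a n)" if "y \<in> cball z r" for n y
        using that \<open>cball z r \<subseteq> _\<close>
        by (intro norm_Phi_term_le) (auto simp: polydisc_preimage_def less_imp_le subset_iff)
      show "(\<lambda>n. norm (a n)) summable_on multi_idx m" using assms by (simp add: Aalg_def)
    qed
    have ev: "\<forall>\<^sub>F X in finite_subsets_at_top (multi_idx m).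
          continuous_on (cball z r) (\<lambda>y. \<Sum>n\<in>X. Phi_term m \<xi> a n y) \<and>
          (\<lambda>y. \<Sum>n\<in>X. Phi_term m \<xi> a n y) holomorphic_on ball z r"
      unfolding Phi_term_def
      by (intro always_eventually allI conjI continuous_intros holomorphic_intros)
    have "(\<lambda>y. \<Sum>\<^sub>\<infinity>n\<in>multi_idx m. Phi_term m \<xi> a n y) holomorphic_on ball z r"
      by (rule holomorphic_uniform_limit[OF ev ul finite_subsets_at_top_neq_bot])
    then show ?thesis by (simp add: Phi_eq_infsum_Phi_term[abs_def])
  qed
  have "Phi m \<xi> a field_differentiable at z" if z: "z \<in> polydisc_preimage m \<xi>" for z
  proof -
    obtain r where "r > 0" "cball z r \<subseteq> polydisc_preimage m \<xi>"
      using open_polydisc_preimage z by (meson open_contains_cball)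
    then have "Phi m \<xi> a holomorphic_on ball z r" by (intro holo_ball)
    then show ?thesis
      using \<open>r > 0\<close> by (intro holomorphic_on_imp_differentiable_at[of _ "ball z r"]) auto
  qed
  then show ?thesis by (simp add: holomorphic_on_def field_differentiable_at_within)
qed

subsection \<open>Coefficient families in one more variable\<close>

lemma multi_idx_subset_Suc: "multi_idx k \<subseteq> multi_idx (Suc k)"
  by (auto simp: multi_idx_def)

lemma multi_idx_eq_last_zero: "multi_idx k = {n \<in> multi_idx (Suc k). n k = 0}"
  by (auto simp: multi_idx_def) (metis le_antisym not_less_eq_eq)

lemma Aalg_subset_Suc: "Aalg k \<subseteq> Aalg (Suc k)"
proof
  fix a assume a: "a \<in> Aalg k"
  have "(\<lambda>n. norm (a n)) summable_on multi_idx (Suc k)"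
    using a by (subst summable_on_cong_neutral[where T="multi_idx k"])
      (auto simp: Aalg_def multi_idx_def)
  then show "a \<in> Aalg (Suc k)" using a multi_idx_subset_Suc by (auto simp: Aalg_def)
qed

lemma normA_Suc: "a \<in> Aalg k \<Longrightarrow> normA (Suc k) a = normA k a"
  unfolding normA_def by (rule infsum_cong_neutral) (auto simp: Aalg_def multi_idx_def)

lemma Phi_Suc: "a \<in> Aalg k \<Longrightarrow> Phi (Suc k) \<xi> a z = Phi k \<xi> a z"
  unfolding Phi_eq_infsum_Phi_term
  by (rule infsum_cong_neutral)
     (use multi_idx_subset_Suc in \<open>auto simp: Aalg_def Phi_term_def multi_idx_def\<close>)

text \<open>\<open>b = coeffs_free_last k b + u_{k+1} \<cdot> coeffs_div_last k b\<close>, the variable \<open>u_{k+1}\<close>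
  being index \<open>k\<close> of a multi-index.\<close>

definition coeffs_free_last :: "nat \<Rightarrow> ((nat \<Rightarrow> nat) \<Rightarrow> complex) \<Rightarrow> (nat \<Rightarrow> nat) \<Rightarrow> complex" where
  "coeffs_free_last k b n = (if n \<in> multi_idx k then b n else 0)"

definition coeffs_div_last :: "nat \<Rightarrow> ((nat \<Rightarrow> nat) \<Rightarrow> complex) \<Rightarrow> (nat \<Rightarrow> nat) \<Rightarrow> complex" where
  "coeffs_div_last k b n = (if n \<in> multi_idx (Suc k) then b (n(k := Suc (n k))) else 0)"

lemma inj_on_incr_last: "inj_on (\<lambda>n. n(k := Suc (n k))) A"
  by (auto simp: inj_on_def fun_eq_iff)

lemma incr_last_image:
  "(\<lambda>n. n(k := Suc (n k))) ` multi_idx (Suc k) = {n \<in> multi_idx (Suc k). n k \<noteq> 0}"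
proof (intro equalityI subsetI)
  fix n assume "n \<in> {n \<in> multi_idx (Suc k). n k \<noteq> 0}"
  then have "n = (n(k := n k - 1))(k := Suc ((n(k := n k - 1)) k))"
    and "n(k := n k - 1) \<in> multi_idx (Suc k)"
    by (auto simp: multi_idx_def)
  then show "n \<in> (\<lambda>n. n(k := Suc (n k))) ` multi_idx (Suc k)" by blast
qed (auto simp: multi_idx_def)

lemma coeffs_free_last_Aalg: "b \<in> Aalg (Suc k) \<Longrightarrow> coeffs_free_last k b \<in> Aalg k"
proof -
  assume "b \<in> Aalg (Suc k)"
  then have "(\<lambda>n. norm (b n)) summable_on multi_idx k"
    unfolding Aalg_def using multi_idx_subset_Suc summable_on_subset_banach by blast
  then have "(\<lambda>n. norm (coeffs_free_last k b n)) summable_on multi_idx k"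
    by (rule summable_on_cong[THEN iffD1, rotated]) (auto simp: coeffs_free_last_def)
  then show ?thesis by (auto simp: Aalg_def coeffs_free_last_def)
qed

lemma normA_coeffs_free_last_le:
  "b \<in> Aalg (Suc k) \<Longrightarrow> normA k (coeffs_free_last k b) \<le> normA (Suc k) b"
  unfolding normA_def
  by (rule infsum_mono_neutral)
     (use coeffs_free_last_Aalg multi_idx_subset_Suc in \<open>auto simp: Aalg_def coeffs_free_last_def\<close>)

lemma coeffs_div_last_Aalg: "b \<in> Aalg (Suc k) \<Longrightarrow> coeffs_div_last k b \<in> Aalg (Suc k)"
proof -
  assume "b \<in> Aalg (Suc k)"
  let ?incr = "\<lambda>n. n(k := Suc (n k))"
  have "(\<lambda>n. norm (b n)) summable_on ?incr ` multi_idx (Suc k)"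
    using \<open>b \<in> Aalg (Suc k)\<close> unfolding incr_last_image Aalg_def
    by (auto intro: summable_on_subset_banach)
  then have "((\<lambda>n. norm (b n)) \<circ> ?incr) summable_on multi_idx (Suc k)"
    by (rule summable_on_reindex[OF inj_on_incr_last, THEN iffD1])
  then have "(\<lambda>n. norm (coeffs_div_last k b n)) summable_on multi_idx (Suc k)"
    by (rule summable_on_cong[THEN iffD1, rotated]) (auto simp: coeffs_div_last_def)
  then show ?thesis by (auto simp: Aalg_def coeffs_div_last_def)
qed

lemma Phi_Suc_decompose:
  assumes b: "b \<in> Aalg (Suc k)" and z: "\<forall>j<Suc k. norm (poly (\<xi> j) z) \<le> 1"
  shows "Phi (Suc k) \<xi> b z =
    Phi k \<xi> (coeffs_free_last k b) z + poly (\<xi> k) z * Phi (Suc k) \<xi> (coeffs_div_last k b) z"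
proof -
  let ?incr = "\<lambda>n. n(k := Suc (n k))"
  let ?T = "\<lambda>n. Phi_term (Suc k) \<xi> b n z"
  define N where "N = {n \<in> multi_idx (Suc k). n k \<noteq> 0}"
  have split: "multi_idx (Suc k) = multi_idx k \<union> N" "multi_idx k \<inter> N = {}"
    unfolding N_def multi_idx_eq_last_zero[of k] by auto
  have "Phi (Suc k) \<xi> b z = infsum ?T (multi_idx k) + infsum ?T N"
    unfolding Phi_eq_infsum_Phi_term split(1)
    by (intro infsum_Un_disjoint summable_on_Phi_term[OF b z] split(2)) (auto simp: split(1))
  moreover have "infsum ?T (multi_idx k) = Phi k \<xi> (coeffs_free_last k b) z"
    unfolding Phi_eq_infsum_Phi_term
    by (rule infsum_cong) (simp add: Phi_term_def coeffs_free_last_def multi_idx_def)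
  moreover have "infsum ?T N = poly (\<xi> k) z * Phi (Suc k) \<xi> (coeffs_div_last k b) z"
  proof -
    have "infsum ?T N = infsum (?T \<circ> ?incr) (multi_idx (Suc k))"
      unfolding N_def incr_last_image[symmetric] by (rule infsum_reindex[OF inj_on_incr_last])
    also have "\<dots> = (\<Sum>\<^sub>\<infinity>n\<in>multi_idx (Suc k).
        poly (\<xi> k) z * Phi_term (Suc k) \<xi> (coeffs_div_last k b) n z)"
    proof (rule infsum_cong)
      fix n assume "n \<in> multi_idx (Suc k)"
      moreover have "(\<Prod>i<k. poly (\<xi> i) z ^ (?incr n) i) = (\<Prod>i<k. poly (\<xi> i) z ^ n i)"
        by (rule prod.cong) auto
      ultimately show "(?T \<circ> ?incr) n = poly (\<xi> k) z * Phi_term (Suc k) \<xi> (coeffs_div_last k b) n z"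
        by (simp add: Phi_term_def coeffs_div_last_def)
    qed
    also have "\<dots> = poly (\<xi> k) z * Phi (Suc k) \<xi> (coeffs_div_last k b) z"
      unfolding Phi_eq_infsum_Phi_term
      by (rule infsum_cmult_right, rule summable_on_Phi_term[OF coeffs_div_last_Aalg[OF b] z]) simp
    finally show ?thesis .
  qed
  ultimately show ?thesis by simp
qed

subsection \<open>Divisibility by a polynomial\<close>

lemma higher_deriv_power_factor:
  fixes f G :: "complex \<Rightarrow> complex"
  assumes "open S" "G holomorphic_on S" "\<And>z. z \<in> S \<Longrightarrow> f z = (z - w) ^ r * G z" "i \<le> r"
  shows "\<exists>H. H holomorphic_on S \<and> (\<forall>z\<in>S. (deriv ^^ i) f z = (z - w) ^ (r - i) * H z)"
  using assms(4)
proof (induction i)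
  case 0
  then show ?case using assms(2,3) by auto
next
  case (Suc i)
  then obtain H where H: "H holomorphic_on S" "\<forall>z\<in>S. (deriv ^^ i) f z = (z - w) ^ (r - i) * H z"
    by auto
  obtain j where j: "r - i = Suc j" "r - Suc i = j"
    using Suc.prems by (metis Suc_diff_Suc Suc_le_lessD)
  define H' where "H' = (\<lambda>z. of_nat (Suc j) * H z + (z - w) * deriv H z)"
  have "H' holomorphic_on S"
    unfolding H'_def using H(1) assms(1) by (intro holomorphic_intros) auto
  moreover have "(deriv ^^ Suc i) f z = (z - w) ^ j * H' z" if z: "z \<in> S" for z
  proof -
    have "(deriv ^^ Suc i) f z = deriv (\<lambda>y. (y - w) ^ Suc j * H y) z"
      using eventually_nhds_in_open[OF assms(1) z] H(2) j(1)
      by (auto intro!: deriv_cong_ev elim!: eventually_mono)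
    also have "\<dots> = of_nat (Suc j) * (z - w) ^ j * H z + (z - w) ^ Suc j * deriv H z"
    proof (rule DERIV_imp_deriv)
      have dH: "(H has_field_derivative deriv H z) (at z)"
        using holomorphic_derivI[OF H(1) assms(1) z] .
      show "((\<lambda>y. (y - w) ^ Suc j * H y) has_field_derivative
          of_nat (Suc j) * (z - w) ^ j * H z + (z - w) ^ Suc j * deriv H z) (at z)"
        by (rule derivative_eq_intros dH refl | simp)+
    qed
    also have "\<dots> = (z - w) ^ j * H' z" by (simp add: H'_def algebra_simps)
    finally show ?thesis .
  qed
  ultimately show ?case unfolding j(2) by blast
qed

lemma pdivides_holomorphic_multiple:
  assumes "open U" "\<forall>w. poly q w = 0 \<longrightarrow> w \<in> U"
    and "G holomorphic_on U" "\<And>z. z \<in> U \<Longrightarrow> f z = poly q z * G z"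
  shows "pdivides q f"
  unfolding pdivides_def
proof (intro allI impI)
  fix w i assume "poly q w = 0" "i < order w q"
  then have "w \<in> U" using assms(2) by blast
  define r where "r = order w q"
  obtain q1 where "q = [:-w, 1:] ^ r * q1"
    using order_divides[of w r q] unfolding r_def by auto
  then have "poly q z = (z - w) ^ r * poly q1 z" for z
    by simp
  then have "f z = (z - w) ^ order w q * (poly q1 z * G z)" if "z \<in> U" for z
    using assms(4)[OF that] by (simp add: r_def mult.assoc)
  moreover have "(\<lambda>z. poly q1 z * G z) holomorphic_on U"
    using assms(3) by (intro holomorphic_intros)
  ultimately obtain H where "\<forall>z\<in>U. (deriv ^^ i) f z = (z - w) ^ (order w q - i) * H z"
    using higher_deriv_power_factor[OF assms(1), of "\<lambda>z. poly q1 z * G z" f w "order w q" i]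
      \<open>i < order w q\<close> by auto
  then show "(deriv ^^ i) f w = 0" using \<open>w \<in> U\<close> \<open>i < order w q\<close> by simp
qed

subsection \<open>Comparison of the quotient norms\<close>

lemma ex_Aalg_Phi_eq_poly:
  assumes "m \<ge> 1" "\<xi> 0 = [:0, 1:]"
  shows "\<exists>a\<in>Aalg m. \<forall>z. Phi m \<xi> a z = poly p z"
proof -
  \<comment> \<open>\<open>e d\<close> is the exponent of \<open>u_1^d\<close>, which \<open>\<Phi>\<close> maps to \<open>z^d\<close> because \<open>\<xi>_1 = z\<close>\<close>
  define e where "e = (\<lambda>d::nat. \<lambda>i::nat. if i = 0 then d else 0)"
  define E where "E = e ` {..degree p}"
  define a where "a = (\<lambda>n. if n \<in> E then coeff p (n 0) else 0)"
  have E: "E \<subseteq> multi_idx m" "finite E"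
    using assms(1) by (auto simp: E_def e_def multi_idx_def)
  have "(\<lambda>n. norm (a n)) summable_on multi_idx m"
    using E by (subst summable_on_cong_neutral[where T=E]) (auto simp: a_def)
  then have "a \<in> Aalg m"
    using E by (auto simp: Aalg_def a_def)
  moreover have "Phi m \<xi> a z = poly p z" for z
  proof -
    have "Phi m \<xi> a z = (\<Sum>n\<in>E. Phi_term m \<xi> a n z)"
      unfolding Phi_eq_infsum_Phi_term using E
      by (subst infsum_cong_neutral[where T=E]) (auto simp: a_def Phi_term_def)
    also have "\<dots> = (\<Sum>d\<le>degree p. Phi_term m \<xi> a (e d) z)"
      unfolding E_def by (subst sum.reindex) (auto simp: inj_on_def e_def fun_eq_iff)
    also have "\<dots> = (\<Sum>d\<le>degree p. coeff p d * z ^ d)"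
    proof (rule sum.cong[OF refl])
      fix d assume "d \<in> {..degree p}"
      moreover obtain m' where "m = Suc m'" using assms(1) by (cases m) auto
      then have "(\<Prod>i<m. poly (\<xi> i) z ^ e d i) = z ^ d"
        using assms(2) by (simp only: prod.lessThan_Suc_shift) (simp add: e_def)
      ultimately show "Phi_term m \<xi> a (e d) z = coeff p d * z ^ d"
        by (simp add: Phi_term_def a_def E_def e_def)
    qed
    also have "\<dots> = poly p z" by (simp add: poly_altdef)
    finally show ?thesis .
  qed
  ultimately show ?thesis by blast
qed

lemma normA_nonneg: "normA m a \<ge> 0"
  unfolding normA_def by (rule infsum_nonneg) simp

lemma piX_Suc_le:
  assumes "k \<ge> 1" "\<xi> 0 = [:0, 1:]" "\<forall>j<Suc k. poly (\<xi> j) 0 = 0"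
  shows "piX (Suc k) \<xi> p \<le> piX k \<xi> p"
proof -
  let ?R = "\<lambda>m. {normA m a |a. a \<in> Aalg m \<and> (\<forall>z\<in>ball 0 (gammaP m \<xi>). Phi m \<xi> a z = poly p z)}"
  have "?R k \<noteq> {}"
    using ex_Aalg_Phi_eq_poly[of k \<xi>, OF assms(1,2)] by blast
  moreover have "bdd_below (?R (Suc k))"
    by (rule bdd_belowI[where m=0]) (auto simp: normA_nonneg)
  moreover have "?R k \<subseteq> ?R (Suc k)"
  proof
    fix x assume "x \<in> ?R k"
    then obtain a where "x = normA k a" "a \<in> Aalg k"
      and "\<forall>z\<in>ball 0 (gammaP k \<xi>). Phi k \<xi> a z = poly p z"
      by blast
    moreover have "ball 0 (gammaP (Suc k) \<xi>) \<subseteq> ball 0 (gammaP k \<xi>)"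
      using gammaP_Suc_le[OF assms] by auto
    ultimately have "x = normA (Suc k) a" "a \<in> Aalg (Suc k)"
      and "\<forall>z\<in>ball 0 (gammaP (Suc k) \<xi>). Phi (Suc k) \<xi> a z = poly p z"
      using Aalg_subset_Suc by (auto simp: normA_Suc Phi_Suc)
    then show "x \<in> ?R (Suc k)" by blast
  qed
  ultimately show ?thesis
    unfolding piX_def by (rule cInf_superset_mono)
qed

lemma pdivides_sub_Phi_coeffs_free_last:
  assumes \<xi>: "k \<ge> 1" "\<xi> 0 = [:0, 1:]" "\<forall>j<Suc k. poly (\<xi> j) 0 = 0"
    and U: "open U" "connected U" "0 \<in> U" "U \<subseteq> ball 0 (gammaP k \<xi>)" "poly (\<xi> k) ` U \<subseteq> ball 0 1"
    and q: "q dvd \<xi> k" "\<forall>w. poly q w = 0 \<longrightarrow> w \<in> U"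
    and b: "b \<in> Aalg (Suc k)" "\<forall>z\<in>ball 0 (gammaP (Suc k) \<xi>). Phi (Suc k) \<xi> b z = poly p z"
  shows "pdivides q (\<lambda>z. poly p z - Phi k \<xi> (coeffs_free_last k b) z)"
proof -
  have U_sub: "U \<subseteq> polydisc_preimage (Suc k) \<xi>"
    using U(4,5) ball_gammaP_subset_polydisc_preimage[of k \<xi>] \<xi>
    unfolding polydisc_preimage_Suc by auto
  have Phi_eq_on_U: "Phi (Suc k) \<xi> b z = poly p z" if "z \<in> U" for z
  proof (rule analytic_continuation_open[where s="ball 0 (gammaP (Suc k) \<xi>) \<inter> U" and s'=U
        and f="Phi (Suc k) \<xi> b" and g="poly p"])
    have "0 \<in> ball 0 (gammaP (Suc k) \<xi>) \<inter> U"
      using gammaP_pos[of "Suc k" \<xi>] \<xi> U(3) by simp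
    then show "ball 0 (gammaP (Suc k) \<xi>) \<inter> U \<noteq> {}" by blast
    show "Phi (Suc k) \<xi> b holomorphic_on U"
      using holomorphic_Phi[OF b(1)] U_sub by (rule holomorphic_on_subset)
    show "poly p holomorphic_on U" by (intro holomorphic_intros)
    show "open (ball 0 (gammaP (Suc k) \<xi>) \<inter> U)" using U(1) by blast
  qed (use U(1,2) that b(2) in simp_all)
  obtain s where s: "\<xi> k = q * s" using q(1) by auto
  let ?c = "coeffs_div_last k b"
  have "(\<lambda>z. poly s z * Phi (Suc k) \<xi> ?c z) holomorphic_on U"
    using holomorphic_on_subset[OF holomorphic_Phi[OF coeffs_div_last_Aalg[OF b(1)]] U_sub]
    by (intro holomorphic_intros)
  moreover have "poly p z - Phi k \<xi> (coeffs_free_last k b) z = poly q z * (poly s z * Phi (Suc k) \<xi> ?c z)"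
    if "z \<in> U" for z
  proof -
    have "\<forall>j<Suc k. norm (poly (\<xi> j) z) \<le> 1"
      using U_sub that by (auto simp: polydisc_preimage_def less_imp_le)
    from Phi_Suc_decompose[OF b(1) this] show ?thesis
      using Phi_eq_on_U[OF that] s by simp
  qed
  ultimately show ?thesis
    by (rule pdivides_holomorphic_multiple[OF U(1) q(2)])
qed

lemma piXq_le_piX_Suc:
  assumes \<xi>: "k \<ge> 1" "\<xi> 0 = [:0, 1:]" "\<forall>j<Suc k. poly (\<xi> j) 0 = 0"
    and U: "open U" "connected U" "0 \<in> U" "U \<subseteq> ball 0 (gammaP k \<xi>)" "poly (\<xi> k) ` U \<subseteq> ball 0 1"
    and q: "q dvd \<xi> k" "\<forall>w. poly q w = 0 \<longrightarrow> w \<in> U"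
  shows "piXq k \<xi> q p \<le> piX (Suc k) \<xi> p"
proof -
  let ?R = "{normA (Suc k) b |b. b \<in> Aalg (Suc k) \<and>
    (\<forall>z\<in>ball 0 (gammaP (Suc k) \<xi>). Phi (Suc k) \<xi> b z = poly p z)}"
  let ?Q = "{normA k a |a. a \<in> Aalg k \<and> pdivides q (\<lambda>z. poly p z - Phi k \<xi> a z)}"
  obtain a where "a \<in> Aalg (Suc k)" "\<forall>z. Phi (Suc k) \<xi> a z = poly p z"
    using ex_Aalg_Phi_eq_poly[of "Suc k" \<xi> p] \<xi>(2) by auto
  then have "?R \<noteq> {}" by blast
  moreover have "Inf ?Q \<le> x" if "x \<in> ?R" for x
  proof -
    from that obtain b where x: "x = normA (Suc k) b" and b: "b \<in> Aalg (Suc k)"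
      and "\<forall>z\<in>ball 0 (gammaP (Suc k) \<xi>). Phi (Suc k) \<xi> b z = poly p z"
      by blast
    then have "pdivides q (\<lambda>z. poly p z - Phi k \<xi> (coeffs_free_last k b) z)"
      by (intro pdivides_sub_Phi_coeffs_free_last[OF \<xi> U q])
    then have "Inf ?Q \<le> normA k (coeffs_free_last k b)"
      using coeffs_free_last_Aalg[OF b]
      by (intro cInf_lower bdd_belowI[where m=0]) (auto simp: normA_nonneg)
    also have "\<dots> \<le> x"
      unfolding x by (rule normA_coeffs_free_last_le[OF b])
    finally show ?thesis .
  qed
  ultimately show ?thesis
    unfolding piXq_def piX_def by (rule cInf_greatest)
qed

theorem lemma3p4:
  fixes k :: nat and \<xi> :: "nat \<Rightarrow> complex poly"
  assumes "k \<ge> 1"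
    and "\<forall>j<k+1. poly (\<xi> j) 0 = 0"
    and "\<xi> 0 = [:0, 1:]"
  shows "(\<forall>p. piX (k+1) \<xi> p \<le> piX k \<xi> p) \<and>
    (\<forall>U q. open U \<and> connected U \<and> 0 \<in> U \<and> U \<subseteq> ball 0 (gammaP k \<xi>) \<and>
       poly (\<xi> k) ` U \<subseteq> ball 0 1 \<and> q \<noteq> 0 \<and> q dvd \<xi> k \<and>
       (\<forall>w. poly q w = 0 \<longrightarrow> w \<in> U) \<longrightarrow>
       (\<forall>p. piXq k \<xi> q p \<le> piX (k+1) \<xi> p))"
proof (intro conjI allI impI)
  have "\<forall>j<Suc k. poly (\<xi> j) 0 = 0" using assms(2) by simp
  note hyps = assms(1,3) this
  show "piX (k+1) \<xi> p \<le> piX k \<xi> p" for p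
    using piX_Suc_le[OF hyps] unfolding Suc_eq_plus1 .
  show "piXq k \<xi> q p \<le> piX (k+1) \<xi> p"
    if "open U \<and> connected U \<and> 0 \<in> U \<and> U \<subseteq> ball 0 (gammaP k \<xi>) \<and>
       poly (\<xi> k) ` U \<subseteq> ball 0 1 \<and> q \<noteq> 0 \<and> q dvd \<xi> k \<and>
       (\<forall>w. poly q w = 0 \<longrightarrow> w \<in> U)" for U q p
    using piXq_le_piX_Suc[OF hyps, of U q p] that unfolding Suc_eq_plus1 by blast
qed

end
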